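(* Let $\mathbf{S}\subset\mathbb{R}^2$ be the unit circle centered at the origin. Let $0\le \alpha_1<\alpha_2<\alpha_3<\alpha_4< \pi$ and set $A_i=(\cos 2\alpha_i,\sin 2\alpha_i)\in\mathbf{S}$ for $1\le i\le 4$ (so $A_1,A_2,A_3,A_4$ are distinct and arranged counterclockwise). For each $i$, let $H_i$ be a Euclidean circle of radius $r_i$ (with $0<r_i<1$) contained in the closed unit disk and tangent to $\mathbf{S}$ from the inside at $A_i$, and assume $H_i\cap H_j=\varnothing$ for all $i\neq j$. For $1\le i<j\le 4$ define: - $d_{ij}$ = the Euclidean distance between $A_i$ and $A_j$; - $t_{ij}$ = the length of the exterior common tangent segment to $H_i$ and $H_j$ (the common tangent drawn so that both circles lie on the same side of it), measured between the two points of tangency; - $\lambda_{ij}=e^{\delta_{ij}/2}$, where $\delta_{ij}$ is defined as follows: regard the open unit disk as the Poincaré disk model of the hyperbolic plane, with metric $ds^2=4(dx^2+dy^2)/(1-x^2-y^2)^2$, so that $H_i$ is a horocycle centered at the ideal point $A_i$; let $\gamma_{ij}$ be the hyperbolic geodesic with ideal endpoints $A_i$ and $A_j$; then $\delta_{ij}$ is the hyperbolic distance along $\gamma_{ij}$ between the points $H_i\cap\gamma_{ij}$ and $H_j\cap\gamma_{ij}$; - $P_{ij}=\det\begin{bmatrix}\cos\alpha_i & \cos\alpha_j\\ \sin\alpha_i & \sin\alpha_j\end{bmatrix}$. Then for all $1\le i<j\le 4$: $$t_{ij}=\sqrt{1-r_i}\,\sqrt{1-r_j}\,d_{ij},\qquad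 t_{ij}=\lambda_{ij}\sqrt{2r_i}\,\sqrt{2r_j},\qquad d_{ij}=2P_{ij}.$$
   Context: Here $H_i\cap\gamma_{ij}$ denotes the single point where the geodesic $\gamma_{ij}$ (a circular arc or diameter orthogonal to $\mathbf{S}$) meets the horocycle $H_i$ other than the ideal point $A_i$ itself. *)

theory Defs
  imports "HOL-Analysis.Analysis"
begin

text \<open>The plane is modelled by the complex numbers; the unit circle S is sphere 0 1,
  the Poincare disk is ball 0 1.\<close>

text \<open>Hyperbolic distance in the Poincare disk model with metric
  ds^2 = 4(dx^2+dy^2)/(1-x^2-y^2)^2.\<close>
definition poincare_dist :: "complex \<Rightarrow> complex \<Rightarrow> real" where
  "poincare_dist z w =
     arcosh (1 + 2 * (cmod (z - w))\<^sup>2 / ((1 - (cmod z)\<^sup>2) * (1 - (cmod w)\<^sup>2)))"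

text \<open>The hyperbolic geodesic with ideal endpoints a, b (points of the unit circle):
  the part inside the open disk of the circle through a and b orthogonal to the unit
  circle (|c|^2 = 1 + rho^2), or of the diameter through a and b.\<close>
definition ideal_geodesic :: "complex \<Rightarrow> complex \<Rightarrow> complex set" where
  "ideal_geodesic a b =
     {z. cmod z < 1 \<and>
        ((\<exists>c \<rho>. \<rho> > 0 \<and> (cmod c)\<^sup>2 = 1 + \<rho>\<^sup>2 \<and> dist a c = \<rho> \<and> dist b c = \<rho> \<and> dist z c = \<rho>)
         \<or> ((\<exists>s::real. b = of_real s * a) \<and> (\<exists>t::real. z = of_real t * a)))}"

text \<open>p, q are the points of tangency of an exterior common tangent line of the circles
  with centres c1, c2 and radii r1, r2: the line through p and q is perpendicular to the
  unit normal u at both points, and both circles lie on the same side of it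
  (the side opposite to u).\<close>
definition ext_common_tangent_pts ::
  "complex \<Rightarrow> real \<Rightarrow> complex \<Rightarrow> real \<Rightarrow> complex \<Rightarrow> complex \<Rightarrow> bool" where
  "ext_common_tangent_pts c1 r1 c2 r2 p q \<longleftrightarrow>
     (\<exists>u. norm u = 1 \<and> p = c1 + of_real r1 * u \<and> q = c2 + of_real r2 * u \<and>
          inner (q - p) u = 0)"

definition ext_tangent_length :: "complex \<Rightarrow> real \<Rightarrow> complex \<Rightarrow> real \<Rightarrow> real" where
  "ext_tangent_length c1 r1 c2 r2 =
     (THE t. \<exists>p q. ext_common_tangent_pts c1 r1 c2 r2 p q \<and> t = dist p q)"

end

(* A circle of radius r inside the unit disk and tangent to it at the unit point a has
   centre (1 - r) a. For two such circles, |c1 - c2|^2 = (r1 - r2)^2 + (1 - r1)(1 - r2)|a - b|^2,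
   and subtracting (r1 - r2)^2 gives the square of the exterior tangent length t.
   For the hyperbolic part, a rotation puts the ideal points at cos b -+ i sin b; there the
   geodesic is the circle c (1 + |z|^2) = 2 Re z, each horocycle meets it in one explicit point,
   and the Poincare distance delta of the two points satisfies
   exp delta = (1 - r1)(1 - r2)|a - b|^2 / (4 r1 r2), which is t^2 / (4 r1 r2).
   The last identity is the chord length |cis 2x - cis 2y| = 2 sin (y - x) for 0 <= y - x <= pi. *)

theory Submission
  imports Defs
begin

section \<open>Circles tangent to the unit circle from inside\<close>

lemma dist_scaled_units_sq:
  fixes a b :: complex and k l :: real
  assumes "cmod a = 1" "cmod b = 1"
  shows "(dist (of_real k * a) (of_real l * b))\<^sup>2 = (k - l)\<^sup>2 + k * l * (dist a b)\<^sup>2"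
proof -
  have "(Re a)\<^sup>2 + (Im a)\<^sup>2 = 1" "(Re b)\<^sup>2 + (Im b)\<^sup>2 = 1"
    using assms by (simp_all add: cmod_power2[symmetric])
  then show ?thesis
    unfolding dist_norm cmod_power2 by simp algebra
qed

lemma dist_cis_cis: "dist (cis x) (cis y) = 2 * \<bar>sin ((y - x) / 2)\<bar>"
proof -
  have half: "2 * ((y - x) / 2) = y - x" by simp
  have "(dist (cis x) (cis y))\<^sup>2 = 2 - 2 * cos (y - x)"
    unfolding dist_norm cmod_power2 by (simp add: cos_diff power2_diff algebra_simps)
  also have "\<dots> = (2 * \<bar>sin ((y - x) / 2)\<bar>)\<^sup>2"
    using cos_double_sin[of "(y - x) / 2", unfolded half] by (simp add: power_mult_distrib)
  finally show ?thesis
    by (rule power2_eq_imp_eq) simp_all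
qed

lemma dist_cis_double:
  assumes "0 \<le> y - x" "y - x \<le> pi"
  shows "dist (cis (2 * x)) (cis (2 * y)) = 2 * sin (y - x)"
proof -
  have half: "(2 * y - 2 * x) / 2 = y - x"
    by simp
  show ?thesis
    using sin_ge_zero[OF assms] unfolding dist_cis_cis half by simp
qed

lemma center_of_internally_tangent_circle:
  fixes A c :: complex
  assumes A: "cmod A = 1" and r: "0 < r" "r < 1"
    and inside: "sphere c r \<subseteq> cball 0 1" and tangent: "A \<in> sphere c r"
  shows "c = of_real (1 - r) * A"
proof -
  have Ac: "cmod (A - c) = r"
    using tangent by (simp add: dist_norm norm_minus_commute)
  have "c \<noteq> 0"
    using Ac A r by auto
  define u where "u = c / of_real (cmod c)"
  have u: "cmod u = 1" "c = of_real (cmod c) * u"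
    using \<open>c \<noteq> 0\<close> by (simp_all add: u_def norm_divide)
  have "c + of_real r * u \<in> sphere c r"
    using u r by (simp add: dist_norm norm_mult)
  moreover have "cmod (c + of_real r * u) = cmod c + r"
  proof -
    have "c + of_real r * u = of_real (cmod c + r) * u"
      by (subst (1) u(2)) (simp add: distrib_right)
    then show ?thesis
      using u r by (simp only: norm_mult norm_of_real) simp
  qed
  ultimately have "cmod c + r \<le> 1"
    using inside by fastforce
  moreover have "1 \<le> cmod c + r"
    using norm_triangle_ineq[of c "A - c"] A Ac by simp
  ultimately have "cmod (c + (A - c)) = cmod c + cmod (A - c)" and "cmod c = 1 - r"
    using A Ac by simp_all
  then have "(1 - r) *\<^sub>R (A - c) = r *\<^sub>R c"
    using norm_triangle_eq[of c "A - c"] Ac by simp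
  then show ?thesis
    by (simp add: scaleR_conv_of_real algebra_simps)
qed

lemma sphere_Int_sphere_nonempty:
  fixes c1 c2 :: complex
  assumes "0 \<le> r1" "\<bar>r1 - r2\<bar> \<le> dist c1 c2" "dist c1 c2 \<le> r1 + r2"
  shows "sphere c1 r1 \<inter> sphere c2 r2 \<noteq> {}"
proof (cases "c1 = c2")
  case True
  then show ?thesis
    using assms by auto
next
  case False
  define e where "e = (c2 - c1) / of_real (dist c1 c2)"
  have e: "cmod e = 1" "c2 - c1 = of_real (dist c1 c2) * e"
    using False by (simp_all add: e_def norm_divide dist_norm norm_minus_commute)
  define near where "near = c1 + of_real r1 * e"
  define far where "far = c1 - of_real r1 * e"
  have "near \<in> sphere c1 r1" "far \<in> sphere c1 r1"
    using e assms(1) by (simp_all add: near_def far_def dist_norm norm_mult)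
  moreover have "c2 - near = of_real (dist c1 c2 - r1) * e" "c2 - far = of_real (dist c1 c2 + r1) * e"
    using e(2) by (simp_all add: near_def far_def algebra_simps)
  then have "dist c2 near = \<bar>dist c1 c2 - r1\<bar>" "dist c2 far = dist c1 c2 + r1"
    using e(1) assms(1) by (simp_all only: dist_norm norm_mult norm_of_real mult_1_right) simp_all
  moreover have "connected (dist c2 ` sphere c1 r1)"
    by (intro connected_continuous_image continuous_intros connected_sphere) simp
  ultimately have "{\<bar>dist c1 c2 - r1\<bar> .. dist c1 c2 + r1} \<subseteq> dist c2 ` sphere c1 r1"
    by (metis connected_contains_Icc imageI)
  moreover have "r2 \<in> {\<bar>dist c1 c2 - r1\<bar> .. dist c1 c2 + r1}"
    using assms(2,3) by auto
  ultimately obtain p where "p \<in> sphere c1 r1" "dist c2 p = r2"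
    by auto
  then show ?thesis
    by auto
qed

lemma exists_unit_inner_eq:
  fixes w :: complex
  assumes "\<bar>x\<bar> \<le> cmod w"
  shows "\<exists>u. cmod u = 1 \<and> inner w u = x"
proof (cases "w = 0")
  case True
  then show ?thesis
    using assms by (intro exI[of _ 1]) simp
next
  case False
  define \<kappa> where "\<kappa> = x / cmod w"
  have "x\<^sup>2 \<le> (cmod w)\<^sup>2"
    using power_mono[OF assms abs_ge_zero, of 2] by simp
  then have "\<kappa>\<^sup>2 \<le> 1"
    using False by (simp add: \<kappa>_def power_divide)
  define u where "u = Complex \<kappa> (sqrt (1 - \<kappa>\<^sup>2)) * (w / of_real (cmod w))"
  have "cmod (Complex \<kappa> (sqrt (1 - \<kappa>\<^sup>2))) = 1"
    using \<open>\<kappa>\<^sup>2 \<le> 1\<close> by (simp add: cmod_def)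
  then have "cmod u = 1"
    using False by (simp add: u_def norm_mult norm_divide)
  moreover have "inner w u = x"
  proof -
    have "cnj w * w = of_real ((cmod w)\<^sup>2)"
      by (simp only: complex_norm_square mult.commute)
    then have "cnj w * u = of_real (cmod w) * Complex \<kappa> (sqrt (1 - \<kappa>\<^sup>2))"
      using False by (simp add: u_def field_simps power2_eq_square)
    then have "Re (cnj w * u) = x"
      using False by (simp add: \<kappa>_def)
    then show ?thesis
      by (simp add: inner_complex_def)
  qed
  ultimately show ?thesis
    by blast
qed

lemma ext_common_tangent_pts_dist_sq:
  assumes "ext_common_tangent_pts c1 r1 c2 r2 p q"
  shows "(dist p q)\<^sup>2 = (dist c1 c2)\<^sup>2 - (r1 - r2)\<^sup>2"
proof -
  obtain u where u: "norm u = 1" "p = c1 + of_real r1 * u" "q = c2 + of_real r2 * u"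
    and perp: "inner (q - p) u = 0"
    using assms unfolding ext_common_tangent_pts_def by blast
  define w where "w = c2 - c1"
  have qp: "q - p = w + (r2 - r1) *\<^sub>R u"
    using u by (simp add: w_def scaleR_conv_of_real algebra_simps)
  have uu: "inner u u = 1"
    using u(1) by (simp add: dot_square_norm)
  then have wu: "inner w u = r1 - r2"
    using perp unfolding qp by (simp add: inner_add_left)
  have "(norm (q - p))\<^sup>2 = inner w w + 2 * (r2 - r1) * inner w u + (r2 - r1)\<^sup>2 * inner u u"
    unfolding qp power2_norm_eq_inner
    by (simp add: inner_add_left inner_add_right inner_commute power2_eq_square algebra_simps)
  also have "\<dots> = (norm w)\<^sup>2 - (r1 - r2)\<^sup>2"
    unfolding wu uu power2_norm_eq_inner by (simp add: power2_eq_square algebra_simps)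
  finally show ?thesis
    by (simp add: w_def dist_norm norm_minus_commute)
qed

lemma ext_tangent_length_eq:
  assumes "\<bar>r1 - r2\<bar> \<le> dist c1 c2"
  shows "ext_tangent_length c1 r1 c2 r2 = sqrt ((dist c1 c2)\<^sup>2 - (r1 - r2)\<^sup>2)"
proof -
  obtain u where u: "cmod u = 1" "inner (c2 - c1) u = r1 - r2"
    using exists_unit_inner_eq[of "r1 - r2" "c2 - c1"] assms
    by (auto simp: dist_norm norm_minus_commute)
  have "(c2 + of_real r2 * u) - (c1 + of_real r1 * u) = (c2 - c1) + (r2 - r1) *\<^sub>R u"
    by (simp add: scaleR_conv_of_real algebra_simps)
  then have "inner ((c2 + of_real r2 * u) - (c1 + of_real r1 * u)) u = 0"
    using u by (simp only: inner_add_left inner_scaleR_left) (simp add: dot_square_norm)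
  then have "ext_common_tangent_pts c1 r1 c2 r2 (c1 + of_real r1 * u) (c2 + of_real r2 * u)"
    unfolding ext_common_tangent_pts_def using u(1) by blast
  moreover have "t = sqrt ((dist c1 c2)\<^sup>2 - (r1 - r2)\<^sup>2)"
    if "ext_common_tangent_pts c1 r1 c2 r2 p q" "t = dist p q" for t p q
    using that ext_common_tangent_pts_dist_sq[OF that(1), symmetric] by simp
  ultimately show ?thesis
    unfolding ext_tangent_length_def by (intro the_equality; metis)
qed

lemma dist_horocycle_centers_sq:
  fixes a b :: complex
  assumes "cmod a = 1" "cmod b = 1"
  shows "(dist (of_real (1 - r1) * a) (of_real (1 - r2) * b))\<^sup>2
    = (r1 - r2)\<^sup>2 + (1 - r1) * (1 - r2) * (dist a b)\<^sup>2"
proof -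
  have "((1 - r1) - (1 - r2))\<^sup>2 = (r1 - r2)\<^sup>2"
    by (simp add: power2_eq_square algebra_simps)
  then show ?thesis
    using dist_scaled_units_sq[OF assms, of "1 - r1" "1 - r2"] by simp
qed

lemma ext_tangent_length_horocycles:
  fixes a b :: complex
  assumes "cmod a = 1" "cmod b = 1" "r1 \<le> 1" "r2 \<le> 1"
  shows "ext_tangent_length (of_real (1 - r1) * a) r1 (of_real (1 - r2) * b) r2
    = sqrt (1 - r1) * sqrt (1 - r2) * dist a b"
proof -
  let ?d = "dist (of_real (1 - r1) * a) (of_real (1 - r2) * b)"
  have d: "?d\<^sup>2 - (r1 - r2)\<^sup>2 = (1 - r1) * (1 - r2) * (dist a b)\<^sup>2"
    using dist_horocycle_centers_sq[OF assms(1,2), of r1 r2] by linarith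
  moreover have "0 \<le> (1 - r1) * (1 - r2) * (dist a b)\<^sup>2"
    using assms(3,4) by (intro mult_nonneg_nonneg) simp_all
  ultimately have "\<bar>r1 - r2\<bar>\<^sup>2 \<le> ?d\<^sup>2"
    unfolding power2_abs by linarith
  then have le: "\<bar>r1 - r2\<bar> \<le> ?d"
    by (rule power2_le_imp_le) simp
  have "ext_tangent_length (of_real (1 - r1) * a) r1 (of_real (1 - r2) * b) r2
      = sqrt ((1 - r1) * (1 - r2) * (dist a b)\<^sup>2)"
    using ext_tangent_length_eq[OF le] d by simp
  also have "\<dots> = sqrt (1 - r1) * sqrt (1 - r2) * dist a b"
    by (simp add: real_sqrt_mult)
  finally show ?thesis .
qed

lemma disjoint_horocycles_separated:
  fixes a b :: complex
  assumes "cmod a = 1" "cmod b = 1" "0 \<le> r1" "r1 \<le> 1" "0 \<le> r2" "r2 \<le> 1"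
    and "sphere (of_real (1 - r1) * a) r1 \<inter> sphere (of_real (1 - r2) * b) r2 = {}"
  shows "4 * r1 * r2 < (1 - r1) * (1 - r2) * (dist a b)\<^sup>2"
proof (rule ccontr)
  let ?d = "dist (of_real (1 - r1) * a) (of_real (1 - r2) * b)"
  assume "\<not> ?thesis"
  moreover have "(r1 + r2)\<^sup>2 = (r1 - r2)\<^sup>2 + 4 * r1 * r2"
    by (simp add: power2_eq_square algebra_simps)
  ultimately have "?d\<^sup>2 \<le> (r1 + r2)\<^sup>2"
    using dist_horocycle_centers_sq[OF assms(1,2), of r1 r2] by linarith
  then have "?d \<le> r1 + r2"
    by (rule power2_le_imp_le) (use assms(3,5) in simp)
  moreover have "0 \<le> (1 - r1) * (1 - r2) * (dist a b)\<^sup>2"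
    using assms(4,6) by (intro mult_nonneg_nonneg) simp_all
  then have "\<bar>r1 - r2\<bar>\<^sup>2 \<le> ?d\<^sup>2"
    unfolding power2_abs using dist_horocycle_centers_sq[OF assms(1,2), of r1 r2] by linarith
  then have "\<bar>r1 - r2\<bar> \<le> ?d"
    by (rule power2_le_imp_le) simp
  ultimately show False
    using sphere_Int_sphere_nonempty[OF assms(3)] assms(7) by blast
qed

section \<open>Rotations of the Poincare disk\<close>

lemma dist_mult_unit:
  assumes "cmod \<omega> = 1"
  shows "dist (\<omega> * x) (\<omega> * y) = dist x y"
  using assms by (simp add: dist_norm right_diff_distrib[symmetric] norm_mult)

lemma poincare_dist_mult_unit:
  assumes "cmod \<omega> = 1"
  shows "poincare_dist (\<omega> * z) (\<omega> * w) = poincare_dist z w"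
proof -
  have "cmod (\<omega> * z - \<omega> * w) = cmod (z - w)"
    using assms by (simp add: right_diff_distrib[symmetric] norm_mult)
  then show ?thesis
    using assms by (simp add: poincare_dist_def norm_mult)
qed

lemma mult_unit_in_ideal_geodesic:
  assumes \<omega>: "cmod \<omega> = 1" and z: "z \<in> ideal_geodesic a b"
  shows "\<omega> * z \<in> ideal_geodesic (\<omega> * a) (\<omega> * b)"
proof -
  have lt: "cmod (\<omega> * z) < 1"
    using z \<omega> by (simp add: ideal_geodesic_def norm_mult)
  from z consider
    (circle) g \<rho> where "\<rho> > 0" "(cmod g)\<^sup>2 = 1 + \<rho>\<^sup>2" "dist a g = \<rho>" "dist b g = \<rho>" "dist z g = \<rho>"
  | (diameter) \<sigma> t where "b = of_real \<sigma> * a" "z = of_real t * a"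
    unfolding ideal_geodesic_def by blast
  then show ?thesis
  proof cases
    case circle
    then show ?thesis
      using \<omega> lt unfolding ideal_geodesic_def
      by (intro CollectI conjI disjI1 exI[of _ "\<omega> * g"] exI[of _ \<rho>]) (simp_all add: dist_mult_unit norm_mult)
  next
    case diameter
    then show ?thesis
      using lt unfolding ideal_geodesic_def
      by (intro CollectI conjI disjI2 exI[of _ \<sigma>] exI[of _ t]) (simp_all add: algebra_simps)
  qed
qed

lemma sphere_Int_ideal_geodesic_mult_unit:
  assumes \<omega>: "cmod \<omega> = 1"
  shows "sphere (\<omega> * C) r \<inter> ideal_geodesic (\<omega> * a) (\<omega> * b)
    = (*) \<omega> ` (sphere C r \<inter> ideal_geodesic a b)"
proof -
  have "cnj \<omega> * \<omega> = 1"
    using \<omega> complex_norm_square[of \<omega>] by (simp add: mult.commute)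
  then have inv: "cnj \<omega> * (\<omega> * x) = x" for x
    by (simp add: mult.assoc[symmetric])
  have "ideal_geodesic (\<omega> * a) (\<omega> * b) = (*) \<omega> ` ideal_geodesic a b"
  proof
    show "(*) \<omega> ` ideal_geodesic a b \<subseteq> ideal_geodesic (\<omega> * a) (\<omega> * b)"
      using mult_unit_in_ideal_geodesic[OF \<omega>] by blast
  next
    show "ideal_geodesic (\<omega> * a) (\<omega> * b) \<subseteq> (*) \<omega> ` ideal_geodesic a b"
    proof
      fix z
      assume "z \<in> ideal_geodesic (\<omega> * a) (\<omega> * b)"
      then have "cnj \<omega> * z \<in> ideal_geodesic a b"
        using mult_unit_in_ideal_geodesic[of "cnj \<omega>" z "\<omega> * a" "\<omega> * b"] \<omega> by (simp add: inv)
      moreover have "z = \<omega> * (cnj \<omega> * z)"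
        using inv[of z] by (simp add: mult.left_commute)
      ultimately show "z \<in> (*) \<omega> ` ideal_geodesic a b"
        by blast
    qed
  qed
  moreover have "sphere (\<omega> * C) r = (*) \<omega> ` sphere C r"
    using sphere_cscale[of \<omega> C r] \<omega> by force
  moreover have "inj ((*) \<omega>)"
    using \<omega> by auto
  ultimately show ?thesis
    by (simp add: image_Int)
qed

lemma unit_pair_frame:
  fixes a b :: complex
  assumes a: "cmod a = 1" and b: "cmod b = 1" and "a \<noteq> b"
  obtains \<omega> c s where "cmod \<omega> = 1" "s \<noteq> 0" "c\<^sup>2 + s\<^sup>2 = 1"
    "a = \<omega> * Complex c (-s)" "b = \<omega> * Complex c s"
proof -
  have "a \<noteq> 0" "b \<noteq> 0"
    using a b by auto
  then have "a = cis (Arg a)" "b = cis (Arg b)"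
    using a b by (simp_all add: cis_Arg sgn_div_norm)
  define \<beta> where "\<beta> = (Arg b - Arg a) / 2"
  define \<omega> where "\<omega> = cis ((Arg a + Arg b) / 2)"
  have "(Arg a + Arg b) / 2 + - \<beta> = Arg a" "(Arg a + Arg b) / 2 + \<beta> = Arg b"
    by (simp_all add: \<beta>_def field_simps)
  then have frame: "a = \<omega> * cis (- \<beta>)" "b = \<omega> * cis \<beta>"
    using \<open>a = cis (Arg a)\<close> \<open>b = cis (Arg b)\<close> by (simp_all add: \<omega>_def cis_mult)
  have "sin \<beta> \<noteq> 0"
  proof
    assume "sin \<beta> = 0"
    then have "cis (2 * \<beta>) = 1"
      by (simp add: complex_eq_iff cos_double_sin sin_double)
    then have "cis \<beta> = cis (- \<beta>)"
      using cis_mult[of "- \<beta>" "2 * \<beta>"] by simp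
    then have "b = a"
      unfolding frame by (rule arg_cong)
    with \<open>a \<noteq> b\<close> show False
      by simp
  qed
  moreover have "cis (- \<beta>) = Complex (cos \<beta>) (- sin \<beta>)" "cis \<beta> = Complex (cos \<beta>) (sin \<beta>)"
    by (simp_all add: complex_eq_iff)
  moreover have "cmod \<omega> = 1"
    by (simp add: \<omega>_def)
  ultimately show ?thesis
    using frame by (intro that[where \<omega> = \<omega> and c = "cos \<beta>" and s = "sin \<beta>"]) simp_all
qed

section \<open>Horocycles and a geodesic in a symmetric frame\<close>

text \<open>With ideal endpoints \<open>Complex c (\<mp>s)\<close>, \<open>c\<^sup>2 + s\<^sup>2 = 1\<close>, the geodesic is the arc of the circle with
  centre \<open>1 / c\<close> and radius \<open>\<bar>s / c\<bar>\<close> (the imaginary axis if \<open>c = 0\<close>), i.e. the locus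
  \<open>c * (1 + (cmod z)\<^sup>2) = 2 * Re z\<close>.\<close>

lemma in_ideal_geodesic_frameD:
  assumes s: "s \<noteq> 0" and cs: "c\<^sup>2 + s\<^sup>2 = 1"
    and z: "z \<in> ideal_geodesic (Complex c (-s)) (Complex c s)"
  shows "c * (1 + (cmod z)\<^sup>2) = 2 * Re z"
proof -
  from z consider
    (circle) g \<rho> where "(cmod g)\<^sup>2 = 1 + \<rho>\<^sup>2" "dist (Complex c (-s)) g = \<rho>"
      "dist (Complex c s) g = \<rho>" "dist z g = \<rho>"
  | (diameter) \<sigma> t where "Complex c s = of_real \<sigma> * Complex c (-s)"
      "z = of_real t * Complex c (-s)"
    unfolding ideal_geodesic_def by blast
  then show ?thesis
  proof cases
    case circle
    have sq: "(dist x y)\<^sup>2 = (Re x - Re y)\<^sup>2 + (Im x - Im y)\<^sup>2" for x y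
      by (simp add: dist_norm cmod_power2)
    have e: "(c - Re g)\<^sup>2 + (-s - Im g)\<^sup>2 = (Re g)\<^sup>2 + (Im g)\<^sup>2 - 1"
      "(c - Re g)\<^sup>2 + (s - Im g)\<^sup>2 = (Re g)\<^sup>2 + (Im g)\<^sup>2 - 1"
      "(Re z - Re g)\<^sup>2 + (Im z - Im g)\<^sup>2 = (Re g)\<^sup>2 + (Im g)\<^sup>2 - 1"
      using circle(1) arg_cong[OF circle(2), of power2] arg_cong[OF circle(3), of power2]
        arg_cong[OF circle(4), of power2]
      unfolding sq cmod_power2 by simp_all
    have "(-s - Im g)\<^sup>2 - (s - Im g)\<^sup>2 = 4 * s * Im g"
      by algebra
    then have "s * Im g = 0"
      using e(1,2) by linarith
    then have "Im g = 0"
      using s by simp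
    then have "c * Re g = 1" "(Re z)\<^sup>2 + (Im z)\<^sup>2 + 1 = 2 * Re z * Re g"
      using e(1,3) cs by (simp_all add: power2_eq_square algebra_simps)
    then have "c * ((Re z)\<^sup>2 + (Im z)\<^sup>2 + 1) = 2 * Re z"
      using s by (simp add: algebra_simps)
    then show ?thesis
      by (simp add: cmod_power2 algebra_simps)
  next
    case diameter
    then have "s = - \<sigma> * s" "c = \<sigma> * c"
      by (simp_all add: complex_eq_iff)
    then have "(\<sigma> + 1) * s = 0"
      by (simp add: algebra_simps)
    then have "\<sigma> = -1"
      using s by (simp add: add_eq_0_iff2)
    then have "c = 0"
      using \<open>c = \<sigma> * c\<close> by simp
    then show ?thesis
      using diameter(2) by simp
  qed
qed

lemma in_ideal_geodesic_frameI:
  assumes s: "s \<noteq> 0" and cs: "c\<^sup>2 + s\<^sup>2 = 1"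
    and lt: "cmod z < 1" and eq: "c * (1 + (cmod z)\<^sup>2) = 2 * Re z"
  shows "z \<in> ideal_geodesic (Complex c (-s)) (Complex c s)"
proof (cases "c = 0")
  case True
  then have "z = of_real (- Im z / s) * Complex c (-s)" "Complex c s = of_real (-1) * Complex c (-s)"
    using eq s by (simp_all add: complex_eq_iff)
  then show ?thesis
    using lt unfolding ideal_geodesic_def by blast
next
  case False
  define g where "g = Complex (1 / c) 0"
  define \<rho> where "\<rho> = \<bar>s / c\<bar>"
  have sq: "(dist x g)\<^sup>2 = (Re x - 1 / c)\<^sup>2 + (Im x)\<^sup>2" for x
    by (simp add: g_def dist_norm cmod_power2)
  have \<rho>2: "\<rho>\<^sup>2 = 1 / c\<^sup>2 - 1"
    using False cs by (simp add: \<rho>_def power_divide field_simps)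
  have "(cmod g)\<^sup>2 = 1 + \<rho>\<^sup>2"
    unfolding \<rho>2 by (simp add: g_def cmod_power2 power_divide)
  have on_circle: "dist x g = \<rho>" if "(Re x - 1 / c)\<^sup>2 + (Im x)\<^sup>2 = 1 / c\<^sup>2 - 1" for x
  proof (rule power2_eq_imp_eq)
    show "(dist x g)\<^sup>2 = \<rho>\<^sup>2"
      unfolding sq \<rho>2 by (rule that)
  qed (simp_all add: \<rho>_def)
  have "(c - 1 / c)\<^sup>2 + s\<^sup>2 = 1 / c\<^sup>2 - 1"
    using False cs by (simp add: power2_diff power_divide field_simps) algebra
  then have "dist (Complex c (-s)) g = \<rho>" "dist (Complex c s) g = \<rho>"
    by (intro on_circle; simp)+
  moreover have "(Re z - 1 / c)\<^sup>2 + (Im z)\<^sup>2 = 1 / c\<^sup>2 - 1"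
    using False eq unfolding cmod_power2 by (simp add: power2_diff power_divide field_simps) algebra
  then have "dist z g = \<rho>"
    by (rule on_circle)
  moreover have "\<rho> > 0"
    using False s by (simp add: \<rho>_def)
  ultimately show ?thesis
    using lt \<open>(cmod g)\<^sup>2 = 1 + \<rho>\<^sup>2\<close> unfolding ideal_geodesic_def by blast
qed

lemma ideal_geodesic_frame:
  assumes "s \<noteq> 0" "c\<^sup>2 + s\<^sup>2 = 1"
  shows "ideal_geodesic (Complex c (-s)) (Complex c s) = {z. cmod z < 1 \<and> c * (1 + (cmod z)\<^sup>2) = 2 * Re z}"
proof -
  have "cmod z < 1" if "z \<in> ideal_geodesic a b" for z a b
    using that by (simp add: ideal_geodesic_def)
  then show ?thesis
    using in_ideal_geodesic_frameD[OF assms] in_ideal_geodesic_frameI[OF assms] by blast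
qed

lemma frame_horocycle_equations:
  fixes c s r x y :: real
  assumes s: "s \<noteq> 0" and r: "0 < r"
  defines "D \<equiv> s\<^sup>2 + r\<^sup>2 * c\<^sup>2"
  shows "(x\<^sup>2 + y\<^sup>2 + 2 * r * x = 0 \<and> s * y = - r * c * x \<and> x < 0)
    \<longleftrightarrow> x = - 2 * r * s\<^sup>2 / D \<and> y = 2 * r\<^sup>2 * c * s / D"
proof -
  have D: "D > 0"
    using s unfolding D_def by (simp add: add_pos_nonneg)
  show ?thesis
  proof
    assume h: "x\<^sup>2 + y\<^sup>2 + 2 * r * x = 0 \<and> s * y = - r * c * x \<and> x < 0"
    then have "x * (D * x + 2 * r * s\<^sup>2) = 0"
      unfolding D_def by algebra
    then have "D * x + 2 * r * s\<^sup>2 = 0"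
      using h by simp
    then have x: "x = - 2 * r * s\<^sup>2 / D"
      using D by (simp add: field_simps)
    then have "s * y = s * (2 * r\<^sup>2 * c * s / D)"
      using h by (simp add: power2_eq_square)
    then have "y = 2 * r\<^sup>2 * c * s / D"
      using s mult_left_cancel by blast
    with x show "x = - 2 * r * s\<^sup>2 / D \<and> y = 2 * r\<^sup>2 * c * s / D" ..
  next
    assume "x = - 2 * r * s\<^sup>2 / D \<and> y = 2 * r\<^sup>2 * c * s / D"
    then have x: "x = - 2 * r * s\<^sup>2 / D" and y: "y = 2 * r\<^sup>2 * c * s / D"
      by simp_all
    have "(2 * r * s\<^sup>2)\<^sup>2 + (2 * r\<^sup>2 * c * s)\<^sup>2 = 4 * r\<^sup>2 * s\<^sup>2 * D"
      unfolding D_def by algebra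
    then have "x\<^sup>2 + y\<^sup>2 = 4 * r\<^sup>2 * s\<^sup>2 / D"
      using D unfolding x y by (simp add: power_divide add_divide_distrib[symmetric] power2_eq_square)
    moreover have "s * y = - r * c * x"
      unfolding x y by (simp add: power2_eq_square)
    moreover have "x < 0"
      unfolding x using D s r by (simp add: divide_neg_pos)
    ultimately show "x\<^sup>2 + y\<^sup>2 + 2 * r * x = 0 \<and> s * y = - r * c * x \<and> x < 0"
      unfolding x by (simp add: power2_eq_square)
  qed
qed

text \<open>The point where the horocycle of Euclidean radius \<open>r\<close> at \<open>Complex c (-s)\<close> meets the geodesic
  towards \<open>Complex c s\<close>; the horocycle at \<open>Complex c s\<close> is handled by replacing \<open>s\<close> with \<open>-s\<close>.\<close>

definition horocycle_geodesic_point :: "real \<Rightarrow> real \<Rightarrow> real \<Rightarrow> complex" where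
  "horocycle_geodesic_point c s r =
     Complex (c * ((1 - r)\<^sup>2 * s\<^sup>2 + r\<^sup>2) / (s\<^sup>2 + r\<^sup>2 * c\<^sup>2))
       (- s * ((1 - r)\<^sup>2 * s\<^sup>2 - r\<^sup>2) / (s\<^sup>2 + r\<^sup>2 * c\<^sup>2))"

lemma mem_horocycle_Int_ideal_geodesic_frame:
  fixes c s r :: real
  assumes s: "s \<noteq> 0" and cs: "c\<^sup>2 + s\<^sup>2 = 1" and r: "0 < r" "r < 1"
  defines "a \<equiv> Complex c (-s)"
  shows "a * (1 + u) \<in> sphere (of_real (1 - r) * a) r \<inter> ideal_geodesic a (Complex c s)
    \<longleftrightarrow> (Re u)\<^sup>2 + (Im u)\<^sup>2 + 2 * r * Re u = 0 \<and> s * Im u = - r * c * Re u \<and> Re u < 0"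
proof -
  txt \<open>Writing a point as \<open>a * (1 + u)\<close>, both the horocycle and the geodesic become conics in \<open>u\<close>
    through \<open>u = 0\<close>; the constraint \<open>cmod z < 1\<close> removes that common point.\<close>
  have "cmod a = 1"
    using cs by (simp add: a_def cmod_def)
  have "a * (1 + u) - of_real (1 - r) * a = a * (u + of_real r)"
    by (simp add: algebra_simps)
  then have d: "dist (of_real (1 - r) * a) (a * (1 + u)) = cmod (u + of_real r)"
    using \<open>cmod a = 1\<close> by (simp add: dist_norm norm_minus_commute norm_mult)
  have "cmod (u + of_real r) = r \<longleftrightarrow> (cmod (u + of_real r))\<^sup>2 = r\<^sup>2"
    using r by (auto intro: power2_eq_imp_eq)
  also have "(cmod (u + of_real r))\<^sup>2 = (Re u)\<^sup>2 + (Im u)\<^sup>2 + 2 * r * Re u + r\<^sup>2"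
    unfolding cmod_power2 by (simp add: power2_eq_square algebra_simps)
  finally have sphere: "a * (1 + u) \<in> sphere (of_real (1 - r) * a) r
      \<longleftrightarrow> (Re u)\<^sup>2 + (Im u)\<^sup>2 + 2 * r * Re u = 0"
    using d by simp
  have "(cmod (a * (1 + u)))\<^sup>2 = (1 + Re u)\<^sup>2 + (Im u)\<^sup>2"
    using \<open>cmod a = 1\<close> by (simp add: norm_mult cmod_power2)
  then have norm: "cmod (a * (1 + u)) < 1 \<longleftrightarrow> (1 + Re u)\<^sup>2 + (Im u)\<^sup>2 < 1"
    by (metis abs_norm_cancel abs_square_less_1)
  have re: "Re (a * (1 + u)) = c * (1 + Re u) + s * Im u"
    by (simp add: a_def)
  have "(1 + Re u)\<^sup>2 + (Im u)\<^sup>2 = 1 + 2 * (1 - r) * Re u + ((Re u)\<^sup>2 + (Im u)\<^sup>2 + 2 * r * Re u)"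
    by (simp add: power2_eq_square algebra_simps)
  then have "(Re u)\<^sup>2 + (Im u)\<^sup>2 + 2 * r * Re u = 0 \<Longrightarrow>
      (1 + Re u)\<^sup>2 + (Im u)\<^sup>2 < 1 \<longleftrightarrow> Re u < 0"
    using r by (simp add: mult_less_0_iff)
  moreover have "c * (1 + ((1 + Re u)\<^sup>2 + (Im u)\<^sup>2)) - 2 * (c * (1 + Re u) + s * Im u)
      = c * ((Re u)\<^sup>2 + (Im u)\<^sup>2 + 2 * r * Re u) - 2 * (s * Im u + r * c * Re u)"
    by (simp add: power2_eq_square algebra_simps)
  then have "(Re u)\<^sup>2 + (Im u)\<^sup>2 + 2 * r * Re u = 0 \<Longrightarrow>
      c * (1 + ((1 + Re u)\<^sup>2 + (Im u)\<^sup>2)) = 2 * (c * (1 + Re u) + s * Im u)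
      \<longleftrightarrow> s * Im u = - r * c * Re u"
    by auto
  ultimately show ?thesis
    unfolding Int_iff sphere ideal_geodesic_frame[OF s cs, folded a_def] mem_Collect_eq norm re
      \<open>(cmod (a * (1 + u)))\<^sup>2 = _\<close>
    by blast
qed

lemma horocycle_Int_ideal_geodesic_frame:
  fixes c s r :: real
  assumes s: "s \<noteq> 0" and cs: "c\<^sup>2 + s\<^sup>2 = 1" and r: "0 < r" "r < 1"
  shows "sphere (of_real (1 - r) * Complex c (-s)) r \<inter> ideal_geodesic (Complex c (-s)) (Complex c s)
    = {horocycle_geodesic_point c s r}"
proof -
  define a where "a = Complex c (-s)"
  define D where "D = s\<^sup>2 + r\<^sup>2 * c\<^sup>2"
  have a: "cmod a = 1" "a * (cnj a * w) = w" for w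
    using cs by (simp_all add: a_def cmod_def complex_eq_iff power2_eq_square algebra_simps)
  have solution: "(Re u)\<^sup>2 + (Im u)\<^sup>2 + 2 * r * Re u = 0 \<and> s * Im u = - r * c * Re u \<and> Re u < 0
      \<longleftrightarrow> u = Complex (- 2 * r * s\<^sup>2 / D) (2 * r\<^sup>2 * c * s / D)" for u
    using frame_horocycle_equations[OF s r(1), where c = c and x = "Re u" and y = "Im u", folded D_def]
    by (simp add: complex_eq_iff)
  define u0 where "u0 = Complex (- 2 * r * s\<^sup>2 / D) (2 * r\<^sup>2 * c * s / D)"
  have "w \<in> sphere (of_real (1 - r) * a) r \<inter> ideal_geodesic a (Complex c s) \<longleftrightarrow> w = a * (1 + u0)" for w
  proof -
    obtain u where w: "w = a * (1 + u)"
      using a(2)[of w] by (metis add.commute diff_add_cancel)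
    have "a \<noteq> 0"
      using a(1) by auto
    then show ?thesis
      unfolding w mem_horocycle_Int_ideal_geodesic_frame[OF s cs r, folded a_def] solution u0_def[symmetric] by simp
  qed
  moreover have "horocycle_geodesic_point c s r = a * (1 + u0)"
  proof -
    have "D \<noteq> 0"
      using s by (simp add: D_def add_nonneg_eq_0_iff)
    then show ?thesis
      unfolding horocycle_geodesic_point_def D_def[symmetric]
      by (simp add: a_def u0_def complex_eq_iff field_simps) (use cs in \<open>simp add: D_def, algebra\<close>)
  qed
  ultimately show ?thesis
    unfolding a_def[symmetric] by (simp add: set_eq_iff)
qed

lemma horocycle_geodesic_point_norm:
  assumes s: "s \<noteq> 0" and cs: "c\<^sup>2 + s\<^sup>2 = 1"
  shows "1 - (cmod (horocycle_geodesic_point c s r))\<^sup>2 = 4 * r * (1 - r) * s\<^sup>2 / (s\<^sup>2 + r\<^sup>2 * c\<^sup>2)"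
proof -
  define D where "D = s\<^sup>2 + r\<^sup>2 * c\<^sup>2"
  define N where "N = (c * ((1 - r)\<^sup>2 * s\<^sup>2 + r\<^sup>2))\<^sup>2 + (s * ((1 - r)\<^sup>2 * s\<^sup>2 - r\<^sup>2))\<^sup>2"
  have "D \<noteq> 0"
    using s by (simp add: D_def add_nonneg_eq_0_iff)
  have "(cmod (horocycle_geodesic_point c s r))\<^sup>2 = N / D\<^sup>2"
    unfolding horocycle_geodesic_point_def cmod_power2 D_def[symmetric] N_def
    by (simp add: power_divide add_divide_distrib power_mult_distrib)
  moreover have "D\<^sup>2 - N = 4 * r * (1 - r) * s\<^sup>2 * D"
    using cs unfolding D_def N_def by algebra
  moreover have "1 - N / D\<^sup>2 = (D\<^sup>2 - N) / D\<^sup>2"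
    using \<open>D \<noteq> 0\<close> by (simp add: field_simps)
  ultimately show ?thesis
    using \<open>D \<noteq> 0\<close> unfolding D_def[symmetric] by (simp add: power2_eq_square)
qed

lemma dist_horocycle_geodesic_points:
  assumes s: "s \<noteq> 0" and cs: "c\<^sup>2 + s\<^sup>2 = 1"
  shows "(cmod (horocycle_geodesic_point c s r1 - horocycle_geodesic_point c (-s) r2))\<^sup>2
    = 4 * s\<^sup>2 * ((1 - r1) * (1 - r2) * s\<^sup>2 - r1 * r2)\<^sup>2 / ((s\<^sup>2 + r1\<^sup>2 * c\<^sup>2) * (s\<^sup>2 + r2\<^sup>2 * c\<^sup>2))"
proof -
  define D1 where "D1 = s\<^sup>2 + r1\<^sup>2 * c\<^sup>2"
  define D2 where "D2 = s\<^sup>2 + r2\<^sup>2 * c\<^sup>2"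
  define X where "X = c * ((1 - r1)\<^sup>2 * s\<^sup>2 + r1\<^sup>2) * D2 - c * ((1 - r2)\<^sup>2 * s\<^sup>2 + r2\<^sup>2) * D1"
  define Y where "Y = s * ((1 - r1)\<^sup>2 * s\<^sup>2 - r1\<^sup>2) * D2 + s * ((1 - r2)\<^sup>2 * s\<^sup>2 - r2\<^sup>2) * D1"
  have "D1 \<noteq> 0" "D2 \<noteq> 0"
    using s by (simp_all add: D1_def D2_def add_nonneg_eq_0_iff)
  have points: "horocycle_geodesic_point c s r1
      = Complex (c * ((1 - r1)\<^sup>2 * s\<^sup>2 + r1\<^sup>2) / D1) (- s * ((1 - r1)\<^sup>2 * s\<^sup>2 - r1\<^sup>2) / D1)"
    "horocycle_geodesic_point c (-s) r2
      = Complex (c * ((1 - r2)\<^sup>2 * s\<^sup>2 + r2\<^sup>2) / D2) (s * ((1 - r2)\<^sup>2 * s\<^sup>2 - r2\<^sup>2) / D2)"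
    by (simp_all add: horocycle_geodesic_point_def D1_def D2_def)
  have "horocycle_geodesic_point c s r1 - horocycle_geodesic_point c (-s) r2
      = Complex (X / (D1 * D2)) (- Y / (D1 * D2))"
    using \<open>D1 \<noteq> 0\<close> \<open>D2 \<noteq> 0\<close> unfolding points X_def Y_def
    by (simp add: complex_eq_iff field_simps)
  then have "(cmod (horocycle_geodesic_point c s r1 - horocycle_geodesic_point c (-s) r2))\<^sup>2
      = (X\<^sup>2 + Y\<^sup>2) / (D1 * D2)\<^sup>2"
    by (simp add: cmod_power2 power_divide add_divide_distrib)
  moreover have "X\<^sup>2 + Y\<^sup>2 = 4 * s\<^sup>2 * ((1 - r1) * (1 - r2) * s\<^sup>2 - r1 * r2)\<^sup>2 * (D1 * D2)"
    using cs unfolding X_def Y_def D1_def D2_def by algebra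
  ultimately show ?thesis
    using \<open>D1 \<noteq> 0\<close> \<open>D2 \<noteq> 0\<close> unfolding D1_def[symmetric] D2_def[symmetric]
    by (simp add: power2_eq_square)
qed

lemma arcosh_mean_inverse:
  fixes M :: real
  assumes "1 \<le> M"
  shows "arcosh ((M + 1 / M) / 2) = ln M"
  using assms arcosh_cosh_real[of "ln M"] cosh_ln_real[of M] by (simp add: inverse_eq_divide)

lemma poincare_dist_horocycle_geodesic_points:
  assumes s: "s \<noteq> 0" and cs: "c\<^sup>2 + s\<^sup>2 = 1"
    and r1: "0 < r1" "r1 < 1" and r2: "0 < r2" "r2 < 1"
    and separated: "r1 * r2 \<le> (1 - r1) * (1 - r2) * s\<^sup>2"
  shows "poincare_dist (horocycle_geodesic_point c s r1) (horocycle_geodesic_point c (-s) r2)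
    = ln ((1 - r1) * (1 - r2) * s\<^sup>2 / (r1 * r2))"
proof -
  define K where "K = (1 - r1) * (1 - r2) * s\<^sup>2"
  define R where "R = r1 * r2"
  define D1 where "D1 = s\<^sup>2 + r1\<^sup>2 * c\<^sup>2"
  define D2 where "D2 = s\<^sup>2 + r2\<^sup>2 * c\<^sup>2"
  have pos: "0 < R" "0 < K" "0 < D1" "0 < D2"
    using r1 r2 s by (simp_all add: R_def K_def D1_def D2_def add_pos_nonneg)
  have denominator: "(4 * r1 * (1 - r1) * s\<^sup>2 / D1) * (4 * r2 * (1 - r2) * s\<^sup>2 / D2) = 16 * R * K * s\<^sup>2 / (D1 * D2)"
    unfolding K_def R_def by (simp add: power2_eq_square)
  have "2 * (4 * s\<^sup>2 * (K - R)\<^sup>2 / (D1 * D2))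
      / ((4 * r1 * (1 - r1) * s\<^sup>2 / D1) * (4 * r2 * (1 - r2) * s\<^sup>2 / D2))
      = (K - R)\<^sup>2 / (2 * R * K)"
    unfolding denominator using pos s by (simp add: field_simps power2_eq_square)
  moreover have "1 + (K - R)\<^sup>2 / (2 * R * K) = (K / R + 1 / (K / R)) / 2"
    using pos by (simp add: field_simps power2_eq_square)
  ultimately have cosh_eq: "1 + 2 * (cmod (horocycle_geodesic_point c s r1 - horocycle_geodesic_point c (-s) r2))\<^sup>2
      / ((1 - (cmod (horocycle_geodesic_point c s r1))\<^sup>2) * (1 - (cmod (horocycle_geodesic_point c (-s) r2))\<^sup>2))
      = (K / R + 1 / (K / R)) / 2"
    using dist_horocycle_geodesic_points[OF s cs, of r1 r2]
      horocycle_geodesic_point_norm[OF s cs, of r1] horocycle_geodesic_point_norm[of "-s" c r2] s cs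
    unfolding K_def R_def D1_def D2_def by simp
  have "1 \<le> K / R"
    using separated pos by (simp add: K_def R_def)
  then show ?thesis
    unfolding poincare_dist_def cosh_eq K_def[symmetric] R_def[symmetric] by (rule arcosh_mean_inverse)
qed

section \<open>Lambda lengths\<close>

lemma poincare_dist_horocycle_points:
  fixes a b :: complex
  assumes a: "cmod a = 1" and b: "cmod b = 1" and "a \<noteq> b"
    and r1: "0 < r1" "r1 < 1" and r2: "0 < r2" "r2 < 1"
    and separated: "4 * r1 * r2 \<le> (1 - r1) * (1 - r2) * (dist a b)\<^sup>2"
  shows "poincare_dist (THE z. z \<in> sphere (of_real (1 - r1) * a) r1 \<inter> ideal_geodesic a b)
                       (THE z. z \<in> sphere (of_real (1 - r2) * b) r2 \<inter> ideal_geodesic a b)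
    = ln ((1 - r1) * (1 - r2) * (dist a b)\<^sup>2 / (4 * r1 * r2))"
proof -
  obtain \<omega> c s where \<omega>: "cmod \<omega> = 1" and s: "s \<noteq> 0" and cs: "c\<^sup>2 + s\<^sup>2 = 1"
    and a_eq: "a = \<omega> * Complex c (-s)" and b_eq: "b = \<omega> * Complex c s"
    using unit_pair_frame[OF a b \<open>a \<noteq> b\<close>] by blast
  have "ideal_geodesic (Complex c (-s)) (Complex c s) = ideal_geodesic (Complex c (- (-s))) (Complex c (-s))"
    using ideal_geodesic_frame[OF s cs] ideal_geodesic_frame[of "-s" c] s cs by simp
  then have "sphere (of_real (1 - r2) * Complex c s) r2 \<inter> ideal_geodesic (Complex c (-s)) (Complex c s)
      = {horocycle_geodesic_point c (-s) r2}"
    using horocycle_Int_ideal_geodesic_frame[of "-s" c r2] s cs r2 by simp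
  moreover have "sphere (of_real (1 - r1) * Complex c (-s)) r1 \<inter> ideal_geodesic (Complex c (-s)) (Complex c s)
      = {horocycle_geodesic_point c s r1}"
    using horocycle_Int_ideal_geodesic_frame[OF s cs r1] .
  moreover have rotate: "sphere (of_real k * (\<omega> * z)) r \<inter> ideal_geodesic (\<omega> * Complex c (-s)) (\<omega> * Complex c s)
      = (*) \<omega> ` (sphere (of_real k * z) r \<inter> ideal_geodesic (Complex c (-s)) (Complex c s))" for k z r
    using sphere_Int_ideal_geodesic_mult_unit[OF \<omega>, of "of_real k * z"] by (simp add: mult.left_commute)
  ultimately have "(THE z. z \<in> sphere (of_real (1 - r1) * a) r1 \<inter> ideal_geodesic a b)
      = \<omega> * horocycle_geodesic_point c s r1"
    "(THE z. z \<in> sphere (of_real (1 - r2) * b) r2 \<inter> ideal_geodesic a b)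
      = \<omega> * horocycle_geodesic_point c (-s) r2"
    unfolding a_eq b_eq rotate by simp_all
  moreover have "dist a b = 2 * \<bar>s\<bar>"
    unfolding a_eq b_eq dist_mult_unit[OF \<omega>] by (simp add: dist_norm cmod_def real_sqrt_mult)
  ultimately show ?thesis
    using poincare_dist_horocycle_geodesic_points[OF s cs r1 r2] separated
    by (simp add: poincare_dist_mult_unit[OF \<omega>] power_mult_distrib mult.assoc)
qed

lemma exp_half_ln:
  fixes M :: real
  assumes "0 < M"
  shows "exp (ln M / 2) = sqrt M"
  using assms by (simp add: powr_half_sqrt[symmetric] powr_def)

lemma lambda_length_disjoint_horocycles:
  fixes a b :: complex
  assumes a: "cmod a = 1" and b: "cmod b = 1" and "a \<noteq> b"
    and r1: "0 < r1" "r1 < 1" and r2: "0 < r2" "r2 < 1"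
    and disjoint: "sphere (of_real (1 - r1) * a) r1 \<inter> sphere (of_real (1 - r2) * b) r2 = {}"
  shows "exp (poincare_dist (THE z. z \<in> sphere (of_real (1 - r1) * a) r1 \<inter> ideal_geodesic a b)
                           (THE z. z \<in> sphere (of_real (1 - r2) * b) r2 \<inter> ideal_geodesic a b) / 2)
           * sqrt (2 * r1) * sqrt (2 * r2)
         = sqrt (1 - r1) * sqrt (1 - r2) * dist a b"
proof -
  define M where "M = (1 - r1) * (1 - r2) * (dist a b)\<^sup>2 / (4 * r1 * r2)"
  have separated: "4 * r1 * r2 < (1 - r1) * (1 - r2) * (dist a b)\<^sup>2"
    using disjoint_horocycles_separated[OF a b] r1 r2 disjoint by simp
  moreover have "0 < 4 * r1 * r2"
    using r1 r2 by simp
  ultimately have "0 < M"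
    unfolding M_def by (intro divide_pos_pos) linarith+
  then have "exp (ln M / 2) * sqrt (2 * r1) * sqrt (2 * r2) = sqrt (M * (2 * r1) * (2 * r2))"
    by (simp add: exp_half_ln real_sqrt_mult)
  also have "M * (2 * r1) * (2 * r2) = (1 - r1) * (1 - r2) * (dist a b)\<^sup>2"
    using r1 r2 by (simp add: M_def field_simps)
  finally show ?thesis
    using poincare_dist_horocycle_points[OF a b \<open>a \<noteq> b\<close> r1 r2] separated
    by (simp add: M_def real_sqrt_mult)
qed

theorem proposition1:
  fixes \<alpha> r :: "nat \<Rightarrow> real"
    and A c :: "nat \<Rightarrow> complex"
    and H :: "nat \<Rightarrow> complex set"
  assumes alpha: "0 \<le> \<alpha> 1" "\<alpha> 1 < \<alpha> 2" "\<alpha> 2 < \<alpha> 3" "\<alpha> 3 < \<alpha> 4" "\<alpha> 4 < pi"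
    and A_def: "\<And>i. A i = Complex (cos (2 * \<alpha> i)) (sin (2 * \<alpha> i))"
    and r_pos: "\<And>i. i \<in> {1..4} \<Longrightarrow> 0 < r i \<and> r i < 1"
    and H_circle: "\<And>i. i \<in> {1..4} \<Longrightarrow> H i = sphere (c i) (r i)"
    and H_in_disk: "\<And>i. i \<in> {1..4} \<Longrightarrow> H i \<subseteq> cball 0 1"
    and H_tangent: "\<And>i. i \<in> {1..4} \<Longrightarrow> A i \<in> H i"
    and H_disj: "\<And>i j. i \<in> {1..4} \<Longrightarrow> j \<in> {1..4} \<Longrightarrow> i \<noteq> j \<Longrightarrow> H i \<inter> H j = {}"
  shows "\<forall>i j. 1 \<le> i \<and> i < j \<and> j \<le> 4 \<longrightarrow>
    (let d = dist (A i) (A j);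
         t = ext_tangent_length (c i) (r i) (c j) (r j);
         \<delta> = poincare_dist (THE z. z \<in> H i \<inter> ideal_geodesic (A i) (A j))
                            (THE z. z \<in> H j \<inter> ideal_geodesic (A i) (A j));
         lam = exp (\<delta> / 2);
         P = cos (\<alpha> i) * sin (\<alpha> j) - cos (\<alpha> j) * sin (\<alpha> i)
     in t = sqrt (1 - r i) * sqrt (1 - r j) * d
      \<and> t = lam * sqrt (2 * r i) * sqrt (2 * r j)
      \<and> d = 2 * P)"
proof -
  have A_cis: "A n = cis (2 * \<alpha> n)" for n
    by (simp add: A_def complex_eq_iff)
  then have unit: "cmod (A n) = 1" for n
    by simp
  have H: "H n = sphere (of_real (1 - r n) * A n) (r n)" and center: "c n = of_real (1 - r n) * A n"
    if "n \<in> {1..4}" for n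
    using center_of_internally_tangent_circle[OF unit, of "r n" "c n" n] r_pos H_in_disk H_tangent H_circle that
    by auto
  have pair: "i \<in> {1..4}" "j \<in> {1..4}" "i \<noteq> j" "dist (A i) (A j) = 2 * sin (\<alpha> j - \<alpha> i)" "A i \<noteq> A j"
    if "1 \<le> i \<and> i < j \<and> j \<le> 4" for i j
  proof -
    have "i = 1 \<or> i = 2 \<or> i = 3" "j = 2 \<or> j = 3 \<or> j = 4"
      using that by auto
    then have range: "0 < \<alpha> j - \<alpha> i" "\<alpha> j - \<alpha> i < pi"
      using that alpha by auto
    have "dist (A i) (A j) = 2 * sin (\<alpha> j - \<alpha> i)"
      unfolding A_cis by (rule dist_cis_double) (use range in auto)
    then show "i \<in> {1..4}" "j \<in> {1..4}" "i \<noteq> j" "dist (A i) (A j) = 2 * sin (\<alpha> j - \<alpha> i)" "A i \<noteq> A j"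
      using that sin_gt_zero[OF range] by auto
  qed
  have tangent: "ext_tangent_length (c i) (r i) (c j) (r j) = sqrt (1 - r i) * sqrt (1 - r j) * dist (A i) (A j)"
    and lambda: "exp (poincare_dist (THE z. z \<in> H i \<inter> ideal_geodesic (A i) (A j))
      (THE z. z \<in> H j \<inter> ideal_geodesic (A i) (A j)) / 2) * sqrt (2 * r i) * sqrt (2 * r j)
      = sqrt (1 - r i) * sqrt (1 - r j) * dist (A i) (A j)"
    if "1 \<le> i \<and> i < j \<and> j \<le> 4" for i j
    using ext_tangent_length_horocycles[OF unit unit, of "r i" "r j"]
      lambda_length_disjoint_horocycles[OF unit unit pair(5)[OF that]] H_disj[OF pair(1-3)[OF that]]
      r_pos[OF pair(1)[OF that]] r_pos[OF pair(2)[OF that]] center[OF pair(1)[OF that]] center[OF pair(2)[OF that]]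
    unfolding H[OF pair(1)[OF that]] H[OF pair(2)[OF that]] by auto
  show ?thesis
    unfolding Let_def using pair(4) tangent lambda by (simp add: sin_diff mult.commute)
qed

end
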